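(* Let $k\ge 1$ and $1\le m\le k$ be integers, and let $-\infty\le\alpha<\beta\le+\infty$. Let $M, G, \widetilde F:(\alpha,\beta)\to\mathbb{R}$ be $C^k$ functions, and let $\mathbb{S}$ denote the set of zeros of $G$ in $(\alpha,\beta)$. Suppose that $$\left(\frac{M(h)}{G(h)}\right)^{(m)}=\frac{\widetilde F(h)}{G^{m+1}(h)}\qquad\text{for all } h\in(\alpha,\beta)\setminus\mathbb{S}.$$ Assume that $\widetilde F$ and $G$ have finitely many zeros in $(\alpha,\beta)$, and that every zero of $M$, $G$ and $\widetilde F$ in $(\alpha,\beta)$ has multiplicity at most $k$. Let $\lambda,\mu,p$ denote the number of zeros of $M$, $\widetilde F$, $G$ in $(\alpha,\beta)$ respectively, counted with multiplicity. Then $$\lambda\le \mu+mp+m.$$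
   Context: A zero $h_0$ of a $C^k$ function $f$ has multiplicity $l$ ($1\le l\le k$) if $f(h_0)=f'(h_0)=\dots=f^{(l-1)}(h_0)=0$ and $f^{(l)}(h_0)\neq 0$. Numbers of zeros "counted with multiplicity" are sums of these multiplicities. *)

theory Defs
  imports "HOL-Analysis.Analysis" "HOL-Library.Extended_Real"
begin

definition ointerval :: "ereal \<Rightarrow> ereal \<Rightarrow> real set" where
  "ointerval a b = {x. a < ereal x \<and> ereal x < b}"

definition Ck_on :: "nat \<Rightarrow> real set \<Rightarrow> (real \<Rightarrow> real) \<Rightarrow> bool" where
  "Ck_on k S f \<longleftrightarrow>
     (\<forall>j<k. \<forall>x\<in>S. ((deriv ^^ j) f has_real_derivative (deriv ^^ Suc j) f x) (at x))
     \<and> continuous_on S ((deriv ^^ k) f)"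

definition zeros_in :: "(real \<Rightarrow> real) \<Rightarrow> real set \<Rightarrow> real set" where
  "zeros_in f S = {x\<in>S. f x = 0}"

definition zero_mult :: "(real \<Rightarrow> real) \<Rightarrow> real \<Rightarrow> nat" where
  "zero_mult f x = (LEAST l. (deriv ^^ l) f x \<noteq> 0)"

definition zeros_mult_le :: "nat \<Rightarrow> (real \<Rightarrow> real) \<Rightarrow> real set \<Rightarrow> bool" where
  "zeros_mult_le k f S \<longleftrightarrow> (\<forall>x\<in>zeros_in f S. \<exists>l\<le>k. (deriv ^^ l) f x \<noteq> 0)"

text \<open>Number of zeros of f in S counted with multiplicity (meaningful for finite zero sets).\<close>
definition count_zeros :: "(real \<Rightarrow> real) \<Rightarrow> real set \<Rightarrow> nat" where
  "count_zeros f S = (\<Sum>x\<in>zeros_in f S. zero_mult f x)"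

end

theory Submission
  imports Defs "HOL-Library.Landau_Symbols"
begin

text \<open>Off the finite set \<open>Z\<close> of zeros of \<open>G\<close>, the quotient \<open>M/G\<close> has the zeros of \<open>M\<close> and its
  \<open>m\<close>-th derivative \<open>F/G\<^sup>m\<^sup>+\<^sup>1\<close> has those of \<open>F\<close>, with the same multiplicities. On the interval
  punctured at \<open>Z\<close>, Rolle's theorem shows that passing to the derivative loses at most
  \<open>card Z + 1\<close> zeros counted with multiplicity, so off \<open>Z\<close> the function \<open>M\<close> has at most
  \<open>\<mu> + m (card Z + 1)\<close> zeros. At a zero \<open>s\<close> of \<open>G\<close> where \<open>M\<close> vanishes to order \<open>r\<close>,
  Leibniz's rule writes \<open>F = G\<^sup>m\<^sup>+\<^sup>1 (M/G)\<^sup>(\<^sup>m\<^sup>)\<close> as a sum of terms \<open>M\<^sup>(\<^sup>i\<^sup>) G\<^sup>i\<close> times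
  continuous factors, each \<open>O((y - s)\<^sup>r)\<close> by Taylor's theorem, so \<open>F\<close> vanishes to order at
  least \<open>r\<close> at \<open>s\<close>. Finally \<open>card Z \<le> p\<close>.\<close>

section \<open>$C^k$ functions\<close>

lemma funpow_deriv_Suc: "(deriv ^^ Suc j) f = (deriv ^^ j) (deriv f)"
  by (simp add: funpow_Suc_right del: funpow.simps)

lemma funpow_deriv_add: "(deriv ^^ j) ((deriv ^^ i) f) = (deriv ^^ (j + i)) f"
  by (simp add: funpow_add)

lemma higher_deriv_cong_open:
  assumes "open S" "\<And>x. x \<in> S \<Longrightarrow> f x = g x" "z \<in> S"
  shows "(deriv ^^ i) f z = (deriv ^^ i) g z"
proof -
  have "eventually (\<lambda>y. f y = g y) (nhds z)"
    by (rule eventually_mono[OF eventually_nhds_in_open[OF assms(1,3)] assms(2)])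
  then show ?thesis by (rule higher_deriv_cong_ev) simp
qed

lemma Ck_on_0: "Ck_on 0 S f \<longleftrightarrow> continuous_on S f"
  by (simp add: Ck_on_def)

lemma Ck_on_Suc:
  "Ck_on (Suc n) S f \<longleftrightarrow>
     (\<forall>x\<in>S. (f has_real_derivative deriv f x) (at x)) \<and> Ck_on n S (deriv f)"
  unfolding Ck_on_def funpow_deriv_Suc
  by (auto simp: less_Suc_eq_0_disj simp del: funpow.simps)
     (auto simp: funpow_deriv_Suc[symmetric] simp del: funpow.simps)

lemma Ck_on_has_real_derivative:
  "Ck_on n S f \<Longrightarrow> j < n \<Longrightarrow> x \<in> S \<Longrightarrow>
     ((deriv ^^ j) f has_real_derivative (deriv ^^ Suc j) f x) (at x)"
  unfolding Ck_on_def by blast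

lemma Ck_on_continuous_on:
  assumes "Ck_on n S f" "j \<le> n"
  shows "continuous_on S ((deriv ^^ j) f)"
proof (cases "j = n")
  case False
  then show ?thesis
    using assms
    by (intro continuous_at_imp_continuous_on ballI DERIV_isCont[OF Ck_on_has_real_derivative]) auto
qed (use assms in \<open>simp add: Ck_on_def\<close>)

lemma Ck_on_subset: "Ck_on n S f \<Longrightarrow> T \<subseteq> S \<Longrightarrow> Ck_on n T f"
  unfolding Ck_on_def by (auto intro: continuous_on_subset)

lemma Ck_on_mono: "Ck_on n S f \<Longrightarrow> j \<le> n \<Longrightarrow> Ck_on j S f"
  using Ck_on_continuous_on[of n S f j] unfolding Ck_on_def by auto

lemma Ck_on_higher_deriv: "Ck_on n S f \<Longrightarrow> i \<le> n \<Longrightarrow> Ck_on (n - i) S ((deriv ^^ i) f)"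
  unfolding Ck_on_def funpow_deriv_add
  by (auto simp del: funpow.simps simp: funpow_deriv_add[symmetric] funpow_deriv_Suc[symmetric])
     (auto simp: funpow_deriv_add add.commute simp del: funpow.simps)

lemma Ck_on_cong:
  assumes "open S" "\<And>x. x \<in> S \<Longrightarrow> f x = g x" "Ck_on n S f"
  shows "Ck_on n S g"
proof -
  have eq: "(deriv ^^ j) f x = (deriv ^^ j) g x" if "x \<in> S" for j x
    using higher_deriv_cong_open[OF assms(1,2) that] .
  have "((deriv ^^ j) g has_real_derivative (deriv ^^ Suc j) g x) (at x)"
    if "j < n" "x \<in> S" for j x
  proof -
    have "eventually (\<lambda>y. (deriv ^^ j) f y = (deriv ^^ j) g y) (nhds x)"
      by (rule eventually_mono[OF eventually_nhds_in_open[OF assms(1) that(2)] eq])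
    from DERIV_cong_ev[OF refl this eq[OF that(2), of "Suc j"]]
    show ?thesis
      using Ck_on_has_real_derivative[OF assms(3) that] by (rule iffD1)
  qed
  moreover have "continuous_on S ((deriv ^^ n) f) = continuous_on S ((deriv ^^ n) g)"
    by (rule continuous_on_cong[OF refl eq])
  ultimately show ?thesis
    using assms(3) unfolding Ck_on_def by blast
qed

lemma Ck_on_SucI:
  assumes "open S" "\<And>x. x \<in> S \<Longrightarrow> (f has_real_derivative f' x) (at x)" "Ck_on n S f'"
  shows "Ck_on (Suc n) S f"
proof -
  have "Ck_on n S (deriv f)"
    by (rule Ck_on_cong[OF assms(1) _ assms(3)]) (use assms(2) DERIV_imp_deriv in metis)
  then show ?thesis
    using assms(2) DERIV_imp_deriv by (metis Ck_on_Suc)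
qed

lemma Ck_on_const: "Ck_on n S (\<lambda>x. c)"
proof (induction n arbitrary: c)
  case (Suc n)
  have "deriv (\<lambda>x. c) = (\<lambda>x. 0)" by (rule ext) simp
  then show ?case using Suc by (simp add: Ck_on_Suc)
qed (simp add: Ck_on_0)

lemma Ck_on_add:
  assumes "open S" "Ck_on n S f" "Ck_on n S g"
  shows "Ck_on n S (\<lambda>x. f x + g x)"
  using assms(2,3)
proof (induction n arbitrary: f g)
  case (Suc n)
  have d: "Ck_on n S (\<lambda>x. deriv f x + deriv g x)"
    using Suc by (auto simp: Ck_on_Suc)
  show ?case
    by (rule Ck_on_SucI[OF assms(1) _ d])
       (use Suc.prems in \<open>auto simp: Ck_on_Suc intro!: derivative_eq_intros\<close>)
qed (auto simp: Ck_on_0 intro: continuous_on_add)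

lemma Ck_on_mult:
  assumes "open S" "Ck_on n S f" "Ck_on n S g"
  shows "Ck_on n S (\<lambda>x. f x * g x)"
  using assms(2,3)
proof (induction n arbitrary: f g)
  case (Suc n)
  have d: "Ck_on n S (\<lambda>x. deriv f x * g x + f x * deriv g x)"
    using Suc Ck_on_mono[OF Suc.prems(1)] Ck_on_mono[OF Suc.prems(2)]
    by (intro Ck_on_add assms(1) Suc.IH) (auto simp: Ck_on_Suc)
  show ?case
    by (rule Ck_on_SucI[OF assms(1) _ d])
       (use Suc.prems in \<open>auto simp: Ck_on_Suc intro!: derivative_eq_intros\<close>)
qed (auto simp: Ck_on_0 intro: continuous_on_mult)

lemma Ck_on_diff:
  "open S \<Longrightarrow> Ck_on n S f \<Longrightarrow> Ck_on n S g \<Longrightarrow> Ck_on n S (\<lambda>x. f x - g x)"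
  using Ck_on_add[of S n f "\<lambda>x. (-1) * g x"] Ck_on_mult[OF _ Ck_on_const, of S n g "-1"]
  by simp

lemma Ck_on_power: "open S \<Longrightarrow> Ck_on n S f \<Longrightarrow> Ck_on n S (\<lambda>x. f x ^ p)"
  by (induction p) (auto intro: Ck_on_const Ck_on_mult)

lemma Ck_on_inverse:
  assumes "open S" "Ck_on n S f" "\<And>x. x \<in> S \<Longrightarrow> f x \<noteq> 0"
  shows "Ck_on n S (\<lambda>x. inverse (f x))"
  using assms(2)
proof (induction n)
  case (Suc n)
  have d: "Ck_on n S (\<lambda>x. - (deriv f x * (inverse (f x) * inverse (f x))))"
    using Suc Ck_on_mono[OF Suc.prems] Ck_on_mult[OF _ Ck_on_const, of S n _ "-1"]
    by (auto simp: Ck_on_Suc intro!: Ck_on_mult assms(1))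
  show ?case
    by (rule Ck_on_SucI[OF assms(1) _ d])
       (use Suc.prems assms(3) in \<open>auto simp: Ck_on_Suc power2_eq_square intro!: derivative_eq_intros\<close>)
qed (use assms(3) in \<open>auto simp: Ck_on_0 intro!: continuous_intros\<close>)

lemma binomial_Suc_left: "Suc n choose k = (n choose k) + (if k = 0 then 0 else n choose (k - 1))"
  by (cases k) simp_all

lemma sum_binomial_Suc_shift:
  fixes a b :: "nat \<Rightarrow> 'a::comm_semiring_1"
  shows "(\<Sum>j = 0..i. of_nat (i choose j) * (a (Suc j) * b (i - j) + a j * b (Suc (i - j)))) =
    (\<Sum>j = 0..Suc i. of_nat (Suc i choose j) * a j * b (Suc i - j))"
proof -
  have "(\<Sum>j = 0..Suc i. of_nat (Suc i choose j) * a j * b (Suc i - j)) =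
      (\<Sum>j = 0..Suc i. of_nat (i choose j) * a j * b (Suc i - j)) +
      (\<Sum>j = 0..Suc i. of_nat (if j = 0 then 0 else i choose (j - 1)) * a j * b (Suc i - j))"
    by (simp add: binomial_Suc_left distrib_right sum.distrib del: binomial_Suc_Suc)
  also have "(\<Sum>j = 0..Suc i. of_nat (i choose j) * a j * b (Suc i - j)) =
      (\<Sum>j = 0..i. of_nat (i choose j) * a j * b (Suc (i - j)))"
    by (simp add: Suc_diff_le binomial_eq_0)
  also have "(\<Sum>j = 0..Suc i. of_nat (if j = 0 then 0 else i choose (j - 1)) * a j * b (Suc i - j)) =
      (\<Sum>j = 0..i. of_nat (i choose j) * a (Suc j) * b (i - j))"
    by (subst sum.atLeast0_atMost_Suc_shift) simp
  finally show ?thesis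
    by (simp add: sum.distrib algebra_simps)
qed

lemma higher_deriv_mult_Ck_on:
  assumes "open S" "Ck_on n S f" "Ck_on n S g" "i \<le> n" "z \<in> S"
  shows "(deriv ^^ i) (\<lambda>w. f w * g w) z =
           (\<Sum>j = 0..i. of_nat (i choose j) * (deriv ^^ j) f z * (deriv ^^ (i - j)) g z)"
  using assms(4,5)
proof (induction i arbitrary: z)
  case (Suc i z)
  have f: "((deriv ^^ j) f has_real_derivative (deriv ^^ Suc j) f z) (at z)"
    and g: "((deriv ^^ j) g has_real_derivative (deriv ^^ Suc j) g z) (at z)" if "j \<le> i" for j
    using Ck_on_has_real_derivative[OF assms(2)] Ck_on_has_real_derivative[OF assms(3)] that Suc.prems
    by simp_all
  have "((\<lambda>w. \<Sum>j = 0..i. of_nat (i choose j) * (deriv ^^ j) f w * (deriv ^^ (i - j)) g w)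
      has_real_derivative (\<Sum>j = 0..i. of_nat (i choose j) *
        ((deriv ^^ Suc j) f z * (deriv ^^ (i - j)) g z + (deriv ^^ j) f z * (deriv ^^ Suc (i - j)) g z))) (at z)"
    by (intro DERIV_sum) (auto intro!: derivative_eq_intros f g simp: algebra_simps)
  then have "((deriv ^^ i) (\<lambda>w. f w * g w) has_real_derivative
      (\<Sum>j = 0..Suc i. of_nat (Suc i choose j) * (deriv ^^ j) f z * (deriv ^^ (Suc i - j)) g z)) (at z)"
    unfolding sum_binomial_Suc_shift[of i "\<lambda>j. (deriv ^^ j) f z" "\<lambda>j. (deriv ^^ j) g z"]
    by (rule has_field_derivative_transform_within_open[OF _ assms(1) Suc.prems(2)])
       (use Suc in simp)
  then show ?case
    by (simp add: DERIV_imp_deriv)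
qed simp

section \<open>Multiplicities of zeros\<close>

text \<open>Without this, \<open>zero_mult f x\<close> is the junk value \<open>0\<close> (a \<open>LEAST\<close> over the empty set) at a
  zero where all derivatives vanish.\<close>
definition zeros_finite_order :: "(real \<Rightarrow> real) \<Rightarrow> real set \<Rightarrow> bool" where
  "zeros_finite_order f S \<longleftrightarrow> (\<forall>x\<in>zeros_in f S. \<exists>l. (deriv ^^ l) f x \<noteq> 0)"

lemma zeros_mult_le_imp_finite_order: "zeros_mult_le k f S \<Longrightarrow> zeros_finite_order f S"
  unfolding zeros_mult_le_def zeros_finite_order_def by blast

lemma zero_mult_eqI:
  "(\<And>i. i < r \<Longrightarrow> (deriv ^^ i) f z = 0) \<Longrightarrow> (deriv ^^ r) f z \<noteq> 0 \<Longrightarrow> zero_mult f z = r"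
  unfolding zero_mult_def by (rule Least_equality) (auto simp: not_less[symmetric])

lemma zero_mult_le: "(deriv ^^ l) f x \<noteq> 0 \<Longrightarrow> zero_mult f x \<le> l"
  unfolding zero_mult_def by (rule Least_le)

lemma higher_deriv_less_zero_mult: "i < zero_mult f x \<Longrightarrow> (deriv ^^ i) f x = 0"
  unfolding zero_mult_def using not_less_Least by blast

lemma higher_deriv_zero_mult_nonzero:
  "(deriv ^^ l) f x \<noteq> 0 \<Longrightarrow> (deriv ^^ zero_mult f x) f x \<noteq> 0"
  unfolding zero_mult_def by (rule LeastI)

lemma zero_mult_pos: "f x = 0 \<Longrightarrow> (deriv ^^ l) f x \<noteq> 0 \<Longrightarrow> 0 < zero_mult f x"
  using higher_deriv_zero_mult_nonzero[of l f x] by (cases "zero_mult f x") auto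

lemma zero_mult_Suc_deriv:
  assumes "f x = 0" "(deriv ^^ l) (deriv f) x \<noteq> 0"
  shows "zero_mult f x = Suc (zero_mult (deriv f) x)"
proof (rule zero_mult_eqI)
  show "(deriv ^^ i) f x = 0" if "i < Suc (zero_mult (deriv f) x)" for i
    using that assms(1) higher_deriv_less_zero_mult
    by (cases i) (auto simp: funpow_deriv_Suc simp del: funpow.simps)
  show "(deriv ^^ Suc (zero_mult (deriv f) x)) f x \<noteq> 0"
    using higher_deriv_zero_mult_nonzero[OF assms(2)]
    by (simp add: funpow_deriv_Suc del: funpow.simps)
qed

text \<open>By Leibniz's rule, \<open>(g u)\<^sup>(\<^sup>r\<^sup>) = g\<^sup>(\<^sup>r\<^sup>) u\<close> at the first nonvanishing derivative \<open>r\<close> of \<open>g\<close>.\<close>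
lemma zero_mult_mult_nonvanishing:
  assumes "open S" "z \<in> S" "Ck_on n S g" "Ck_on n S u" "u z \<noteq> 0"
    and "\<And>x. x \<in> S \<Longrightarrow> f x = g x * u x"
    and "(deriv ^^ l) g z \<noteq> 0" "l \<le> n"
  shows "zero_mult f z = zero_mult g z" "(deriv ^^ zero_mult g z) f z \<noteq> 0"
proof -
  define r where "r = zero_mult g z"
  have rn: "r \<le> n" using zero_mult_le[OF assms(7)] assms(8) r_def by simp
  have leibniz: "(deriv ^^ i) f z =
      (\<Sum>j = 0..i. of_nat (i choose j) * (deriv ^^ j) g z * (deriv ^^ (i - j)) u z)" if "i \<le> n" for i
    using higher_deriv_cong_open[OF assms(1,6,2)] higher_deriv_mult_Ck_on[OF assms(1,3,4) that assms(2)]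
    by simp
  have below: "(deriv ^^ i) f z = 0" if "i < r" for i
    using leibniz[of i] that rn r_def higher_deriv_less_zero_mult[of _ g z] by simp
  have "(deriv ^^ r) f z = (\<Sum>j = 0..r. if j = r then (deriv ^^ r) g z * u z else 0)"
    unfolding leibniz[OF rn] by (rule sum.cong) (auto simp: r_def higher_deriv_less_zero_mult)
  also have "\<dots> \<noteq> 0"
    using higher_deriv_zero_mult_nonzero[OF assms(7)] assms(5) r_def by simp
  finally have at: "(deriv ^^ r) f z \<noteq> 0" .
  show "zero_mult f z = zero_mult g z" "(deriv ^^ zero_mult g z) f z \<noteq> 0"
    using zero_mult_eqI[OF below at] at r_def by simp_all
qed

lemma zeros_mult_le_subset: "zeros_mult_le k f S \<Longrightarrow> T \<subseteq> S \<Longrightarrow> zeros_mult_le k f T"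
  unfolding zeros_mult_le_def zeros_in_def by blast

lemma count_zeros_mult_nonvanishing:
  assumes "open U" "Ck_on k U g" "Ck_on k U u" "\<And>x. x \<in> U \<Longrightarrow> u x \<noteq> 0"
    and "\<And>x. x \<in> U \<Longrightarrow> f x = g x * u x" "zeros_mult_le k g U"
  shows "zeros_in f U = zeros_in g U" "zeros_finite_order f U" "count_zeros f U = count_zeros g U"
proof -
  show zeros: "zeros_in f U = zeros_in g U"
    using assms(4,5) unfolding zeros_in_def by auto
  have mult: "zero_mult f x = zero_mult g x" "(deriv ^^ zero_mult g x) f x \<noteq> 0"
    if zero: "x \<in> zeros_in g U" for x
  proof -
    have x: "x \<in> U" using zero unfolding zeros_in_def by blast
    obtain l where "(deriv ^^ l) g x \<noteq> 0" "l \<le> k"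
      using assms(6) zero unfolding zeros_mult_le_def by blast
    then show "zero_mult f x = zero_mult g x" "(deriv ^^ zero_mult g x) f x \<noteq> 0"
      using zero_mult_mult_nonvanishing[OF assms(1) x assms(2,3) assms(4)[OF x] assms(5)] by blast+
  qed
  show "zeros_finite_order f U"
    unfolding zeros_finite_order_def zeros using mult(2) by blast
  show "count_zeros f U = count_zeros g U"
    unfolding count_zeros_def zeros by (rule sum.cong[OF refl mult(1)])
qed

lemma count_zeros_split:
  assumes "finite (zeros_in f S)"
  shows "count_zeros f S = count_zeros f (S - Z) + (\<Sum>x\<in>zeros_in f S \<inter> Z. zero_mult f x)"
proof -
  have "zeros_in f S = zeros_in f (S - Z) \<union> (zeros_in f S \<inter> Z)"
    "zeros_in f (S - Z) \<inter> (zeros_in f S \<inter> Z) = {}"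
    unfolding zeros_in_def by auto
  moreover have "finite (zeros_in f (S - Z))"
    using assms by (rule finite_subset[rotated]) (auto simp: zeros_in_def)
  ultimately show ?thesis
    unfolding count_zeros_def using assms by (metis finite_Int sum.union_disjoint)
qed

lemma card_le_count_zeros:
  assumes "zeros_finite_order f S"
  shows "card (zeros_in f S) \<le> count_zeros f S"
proof -
  have "1 \<le> zero_mult f x" if "x \<in> zeros_in f S" for x
    using assms that zero_mult_pos[of f x] unfolding zeros_finite_order_def zeros_in_def
    by (auto simp: Suc_le_eq)
  then show ?thesis
    unfolding count_zeros_def using sum_mono[of "zeros_in f S" "\<lambda>_. 1::nat"] by simp
qed

section \<open>Counting zeros with Rolle's theorem\<close>

lemma Rolle_zero_between:
  assumes "is_interval S" and deriv: "\<And>x. x \<in> S - Z \<Longrightarrow> (\<psi> has_real_derivative deriv \<psi> x) (at x)"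
    and "y \<in> zeros_in \<psi> (S - Z)" "x \<in> zeros_in \<psi> (S - Z)" "y < x"
  shows "\<exists>w\<in>zeros_in (deriv \<psi>) (S - Z) \<union> Z. y < w \<and> w < x"
proof (cases "\<exists>w\<in>Z. y < w \<and> w < x")
  case False
  have y: "y \<in> S - Z" "\<psi> y = 0" and x: "x \<in> S - Z" "\<psi> x = 0"
    using assms(3,4) unfolding zeros_in_def by auto
  have sub: "{y..x} \<subseteq> S - Z"
  proof
    fix t assume t: "t \<in> {y..x}"
    then have "t \<in> S" using assms(1) x y unfolding is_interval_1 by auto
    moreover have "t \<notin> Z" using False t x y by (cases "t = y \<or> t = x") auto
    ultimately show "t \<in> S - Z" by simp
  qed
  have "continuous_on {y..x} \<psi>"
    using sub deriv by (intro continuous_at_imp_continuous_on) (auto intro: DERIV_isCont)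
  moreover have "\<psi> differentiable (at t)" if "y < t" "t < x" for t
  proof -
    have "t \<in> {y..x}" using that by simp
    then have "t \<in> S - Z" using sub by blast
    then show ?thesis using deriv real_differentiable_def by blast
  qed
  ultimately obtain w where w: "y < w" "w < x" "DERIV \<psi> w :> 0"
    using Rolle[OF assms(5)] x y by metis
  then have "w \<in> {y..x}" by simp
  then have "w \<in> S - Z" using sub by blast
  with w(3) have "w \<in> zeros_in (deriv \<psi>) (S - Z)"
    using DERIV_unique[OF deriv] unfolding zeros_in_def by blast
  with w show ?thesis by blast
qed blast

text \<open>Between consecutive elements of \<open>A\<close> lie distinct elements of \<open>W - A\<close>.\<close>
lemma card_le_card_separators:
  fixes A W :: "'a::linorder set"
  assumes "finite A" "finite W"
    and separate: "\<And>x y. x \<in> A \<Longrightarrow> y \<in> A \<Longrightarrow> x < y \<Longrightarrow> \<exists>w\<in>W. x < w \<and> w < y"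
  shows "card A \<le> card (W - A) + 1"
proof -
  have "card A \<le> card {w \<in> W - A. w < Max A} + 1" if "A \<noteq> {}"
    using assms(1) separate that
  proof (induction A rule: finite_linorder_max_induct)
    case (insert b A)
    show ?case
    proof (cases "A = {}")
      case False
      define y where "y = Max A"
      have y: "y \<in> A" "\<forall>a\<in>A. a \<le> y" "y < b"
        using False insert.hyps y_def by auto
      then obtain w where w: "w \<in> W" "y < w" "w < b"
        using insert.prems(1) by blast
      have "card A \<le> card {w \<in> W - A. w < y} + 1"
        using insert y_def False by blast
      moreover have "b \<notin> A" using insert.hyps(2) by blast
      ultimately have "card (insert b A) \<le> card {w \<in> W - A. w < y} + 2"
        using insert.hyps(1) by simp
      also have "\<dots> = card (insert w {w \<in> W - A. w < y}) + 1"
        using assms(2) w(2) by (subst card_insert_disjoint) auto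
      also have "\<dots> \<le> card {w \<in> W - insert b A. w < b} + 1"
        using assms(2) w y by (intro add_right_mono card_mono) (auto dest: leD)
      finally show ?thesis
        using insert.hyps by (simp add: Max_insert2 less_imp_le)
    qed simp
  qed simp
  moreover have "card {w \<in> W - A. w < Max A} \<le> card (W - A)"
    using assms(2) by (intro card_mono) auto
  ultimately show ?thesis by (cases "A = {}") auto
qed

lemma card_zeros_le_Rolle:
  assumes "is_interval S" "finite Z"
    and "\<And>x. x \<in> S - Z \<Longrightarrow> (\<psi> has_real_derivative deriv \<psi> x) (at x)"
    and "finite (zeros_in (deriv \<psi>) (S - Z))"
  defines "A \<equiv> zeros_in \<psi> (S - Z)" and "B \<equiv> zeros_in (deriv \<psi>) (S - Z)"
  shows "finite A" "card A \<le> card (B - A) + card Z + 1"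
proof -
  have W: "finite (B \<union> Z)" using assms(2,4) B_def by simp
  have sep: "card A' \<le> card ((B \<union> Z) - A') + 1" if "finite A'" "A' \<subseteq> A" for A'
    using Rolle_zero_between[OF assms(1,3)] that W A_def B_def
    by (intro card_le_card_separators) (auto simp: subset_iff)
  have "card A' \<le> card (B \<union> Z) + 1" if "A' \<subseteq> A" "finite A'" for A'
    using sep[OF that(2,1)] card_mono[OF W, of "B \<union> Z - A'"] by simp
  then show "finite A"
    using finite_if_finite_subsets_card_bdd by blast
  then have "card A \<le> card ((B \<union> Z) - A) + 1" by (rule sep) simp
  also have "card ((B \<union> Z) - A) \<le> card ((B - A) \<union> Z)"
    using W by (intro card_mono) auto
  also have "\<dots> \<le> card (B - A) + card Z"
    by (rule card_Un_le)
  finally show "card A \<le> card (B - A) + card Z + 1" by simp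
qed

text \<open>Every zero of \<open>\<psi>\<close> has multiplicity one more than as a zero of \<open>\<psi>'\<close> (which is \<open>0\<close> if
  \<open>\<psi>'\<close> does not vanish there); the Rolle zeros of \<open>\<psi>'\<close> not already zeros of \<open>\<psi>\<close> pay for
  the remaining terms.\<close>
lemma count_zeros_le_count_zeros_deriv:
  assumes "is_interval S" "finite Z"
    and "\<And>x. x \<in> S - Z \<Longrightarrow> (\<psi> has_real_derivative deriv \<psi> x) (at x)"
    and "finite (zeros_in (deriv \<psi>) (S - Z))" "zeros_finite_order (deriv \<psi>) (S - Z)"
  shows "finite (zeros_in \<psi> (S - Z))" "zeros_finite_order \<psi> (S - Z)"
    "count_zeros \<psi> (S - Z) \<le> count_zeros (deriv \<psi>) (S - Z) + card Z + 1"
proof -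
  define A where "A = zeros_in \<psi> (S - Z)"
  define B where "B = zeros_in (deriv \<psi>) (S - Z)"
  note card_A = card_zeros_le_Rolle[OF assms(1-4), folded A_def B_def]
  have "\<exists>l. (deriv ^^ l) (deriv \<psi>) x \<noteq> 0" if "x \<in> A" for x
    using assms(5) that unfolding A_def zeros_finite_order_def zeros_in_def
    by (metis (mono_tags, lifting) funpow_0 mem_Collect_eq)
  then obtain l where l: "(deriv ^^ l x) (deriv \<psi>) x \<noteq> 0" if "x \<in> A" for x
    by metis
  have mult_A: "zero_mult \<psi> x = Suc (zero_mult (deriv \<psi>) x)" if "x \<in> A" for x
    using that l zero_mult_Suc_deriv[of \<psi> x] unfolding A_def zeros_in_def by blast
  have finite_order: "(deriv ^^ Suc (l x)) \<psi> x \<noteq> 0" if "x \<in> A" for x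
    using l[OF that] by (simp add: funpow_deriv_Suc del: funpow.simps)
  have mult_B: "zero_mult (deriv \<psi>) x = 0" if "x \<in> A - B" for x
    using that zero_mult_le[of 0 "deriv \<psi>" x] unfolding A_def B_def zeros_in_def by force
  have "count_zeros \<psi> (S - Z) = card A + (\<Sum>x\<in>A. zero_mult (deriv \<psi>) x)"
    unfolding count_zeros_def A_def[symmetric] by (simp add: mult_A sum_Suc)
  also have "(\<Sum>x\<in>A. zero_mult (deriv \<psi>) x) = (\<Sum>x\<in>A \<inter> B. zero_mult (deriv \<psi>) x)"
    using card_A(1) mult_B by (intro sum.mono_neutral_right) auto
  finally have count_A: "count_zeros \<psi> (S - Z) = card A + (\<Sum>x\<in>A \<inter> B. zero_mult (deriv \<psi>) x)" .
  have "count_zeros (deriv \<psi>) (S - Z) =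
      (\<Sum>x\<in>B - A. zero_mult (deriv \<psi>) x) + (\<Sum>x\<in>A \<inter> B. zero_mult (deriv \<psi>) x)"
    unfolding count_zeros_def B_def[symmetric] using assms(4) B_def
    by (metis add.commute inf_commute sum.Int_Diff)
  moreover have "card (B - A) \<le> (\<Sum>x\<in>B - A. zero_mult (deriv \<psi>) x)"
  proof -
    have "1 \<le> zero_mult (deriv \<psi>) x" if "x \<in> B" for x
      using assms(5) that zero_mult_pos[of "deriv \<psi>" x]
      unfolding B_def zeros_finite_order_def zeros_in_def by (auto simp: Suc_le_eq)
    then show ?thesis
      using sum_mono[of "B - A" "\<lambda>_. 1::nat"] by simp
  qed
  ultimately show "count_zeros \<psi> (S - Z) \<le> count_zeros (deriv \<psi>) (S - Z) + card Z + 1"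
    using count_A card_A(2) by linarith
  show "finite (zeros_in \<psi> (S - Z))" "zeros_finite_order \<psi> (S - Z)"
    using card_A(1) finite_order unfolding A_def zeros_finite_order_def by blast+
qed

lemma count_zeros_le_count_zeros_higher_deriv:
  assumes "is_interval S" "finite Z" "Ck_on j (S - Z) f"
    and "finite (zeros_in ((deriv ^^ j) f) (S - Z))" "zeros_finite_order ((deriv ^^ j) f) (S - Z)"
  shows "finite (zeros_in f (S - Z)) \<and> zeros_finite_order f (S - Z) \<and>
    count_zeros f (S - Z) \<le> count_zeros ((deriv ^^ j) f) (S - Z) + j * (card Z + 1)"
  using assms(3-5)
proof (induction j arbitrary: f)
  case (Suc j)
  have deriv: "\<And>x. x \<in> S - Z \<Longrightarrow> (f has_real_derivative deriv f x) (at x)"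
    and "Ck_on j (S - Z) (deriv f)"
    using Suc.prems(1) by (simp_all add: Ck_on_Suc)
  then have IH: "finite (zeros_in (deriv f) (S - Z)) \<and> zeros_finite_order (deriv f) (S - Z) \<and>
      count_zeros (deriv f) (S - Z) \<le> count_zeros ((deriv ^^ Suc j) f) (S - Z) + j * (card Z + 1)"
    using Suc.IH Suc.prems(2,3) by (simp add: funpow_deriv_Suc del: funpow.simps)
  then show ?case
    using count_zeros_le_count_zeros_deriv[OF assms(1,2) deriv] by fastforce
qed simp

section \<open>Order of vanishing and Taylor's theorem\<close>

lemma Taylor_vanishing_derivs:
  assumes "Ck_on n S f" "p \<le> n" "\<And>i. i < p \<Longrightarrow> (deriv ^^ i) f s = 0"
    and "closed_segment s y \<subseteq> S"
  shows "\<exists>t\<in>closed_segment s y. f y = (deriv ^^ p) f t / fact p * (y - s) ^ p"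
proof (cases "p = 0 \<or> y = s")
  case True
  then show ?thesis
    using assms(3)[of 0] by (cases p) (auto intro!: bexI[of _ y])
next
  case False
  have "\<exists>t. (if y < s then y < t \<and> t < s else s < t \<and> t < y) \<and>
      f y = (\<Sum>i<p. (deriv ^^ i) f s / fact i * (y - s) ^ i) + (deriv ^^ p) f t / fact p * (y - s) ^ p"
  proof (rule Taylor[of p "\<lambda>i. (deriv ^^ i) f" f "min y s" "max y s"])
    show "\<forall>i t. i < p \<and> min y s \<le> t \<and> t \<le> max y s \<longrightarrow>
        ((deriv ^^ i) f has_real_derivative (deriv ^^ Suc i) f t) (at t)"
      using Ck_on_has_real_derivative[OF assms(1)] assms(2,4)
      by (auto simp: closed_segment_eq_real_ivl split: if_splits)
  qed (use False in auto)
  then obtain t where t: "if y < s then y < t \<and> t < s else s < t \<and> t < y"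
    "f y = (\<Sum>i<p. (deriv ^^ i) f s / fact i * (y - s) ^ i) + (deriv ^^ p) f t / fact p * (y - s) ^ p"
    by blast
  have "t \<in> closed_segment s y"
    using t(1) by (auto simp: closed_segment_eq_real_ivl split: if_splits)
  moreover have "f y = (deriv ^^ p) f t / fact p * (y - s) ^ p"
    using t(2) assms(3) by simp
  ultimately show ?thesis by blast
qed

lemma eventually_closed_segment_nhds:
  fixes s :: real
  assumes "eventually P (nhds s)"
  shows "eventually (\<lambda>y. \<forall>t\<in>closed_segment s y. P t) (nhds s)"
proof -
  obtain d where "d > 0" "\<And>t. dist t s < d \<Longrightarrow> P t"
    using assms unfolding eventually_nhds_metric by blast
  moreover have "\<forall>t\<in>closed_segment s y. P t" if "dist y s < d" for y
  proof -
    have "closed_segment s y \<subseteq> ball s d"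
      using that \<open>d > 0\<close> by (intro closed_segment_subset) (auto simp: dist_commute)
    then show ?thesis
      using \<open>\<And>t. dist t s < d \<Longrightarrow> P t\<close> by (auto simp: dist_commute)
  qed
  ultimately show ?thesis
    unfolding eventually_nhds_metric by blast
qed

lemma eventually_near_continuous:
  fixes h :: "real \<Rightarrow> real"
  assumes "open S" "s \<in> S" "continuous_on S h"
  shows "eventually (\<lambda>t. t \<in> S \<and> \<bar>h t\<bar> < \<bar>h s\<bar> + 1) (nhds s)"
    "h s \<noteq> 0 \<Longrightarrow> eventually (\<lambda>t. t \<in> S \<and> \<bar>h s\<bar> / 2 < \<bar>h t\<bar>) (nhds s)"
proof -
  have "isCont h s"
    using assms continuous_on_eq_continuous_at by blast
  then have lim: "((\<lambda>t. \<bar>h t\<bar>) \<longlongrightarrow> \<bar>h s\<bar>) (nhds s)"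
    by (intro tendsto_rabs) (simp add: isCont_def tendsto_at_iff_tendsto_nhds)
  note in_S = eventually_nhds_in_open[OF assms(1,2)]
  show "eventually (\<lambda>t. t \<in> S \<and> \<bar>h t\<bar> < \<bar>h s\<bar> + 1) (nhds s)"
    using eventually_conj[OF in_S order_tendstoD(2)[OF lim, of "\<bar>h s\<bar> + 1"]] by simp
  show "eventually (\<lambda>t. t \<in> S \<and> \<bar>h s\<bar> / 2 < \<bar>h t\<bar>) (nhds s)" if "h s \<noteq> 0"
    using eventually_conj[OF in_S order_tendstoD(1)[OF lim, of "\<bar>h s\<bar> / 2"]] that by simp
qed

lemma bigo_power_if_vanishing_derivs:
  assumes "open S" "s \<in> S" "Ck_on n S f" "r \<le> n" "\<And>j. j < r \<Longrightarrow> (deriv ^^ j) f s = 0"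
  shows "f \<in> O[at s](\<lambda>y. (y - s) ^ r)"
proof -
  define B where "B = \<bar>(deriv ^^ r) f s\<bar> + 1"
  have "eventually (\<lambda>y. \<forall>t\<in>closed_segment s y. t \<in> S \<and> \<bar>(deriv ^^ r) f t\<bar> < B) (nhds s)"
    unfolding B_def
    by (intro eventually_closed_segment_nhds eventually_near_continuous(1)
        assms(1,2) Ck_on_continuous_on[OF assms(3,4)])
  then have "eventually (\<lambda>y. \<bar>f y\<bar> \<le> B / fact r * \<bar>(y - s) ^ r\<bar>) (nhds s)"
  proof eventually_elim
    case (elim y)
    then obtain t where "t \<in> closed_segment s y" "f y = (deriv ^^ r) f t / fact r * (y - s) ^ r"
      using Taylor_vanishing_derivs[OF assms(3,4,5)] by blast
    with elim show ?case
      by (auto simp: abs_mult intro!: mult_right_mono divide_right_mono)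
  qed
  then have "eventually (\<lambda>y. \<bar>f y\<bar> \<le> B / fact r * \<bar>(y - s) ^ r\<bar>) (at s)"
    using eventually_nhds_conv_at by blast
  then show ?thesis
    by (intro bigoI[where c = "B / fact r"]) (simp only: real_norm_def)
qed

lemma bigomega_power_if_first_nonvanishing_deriv:
  assumes "open S" "s \<in> S" "Ck_on n S f" "j \<le> n" "\<And>i. i < j \<Longrightarrow> (deriv ^^ i) f s = 0"
    and "(deriv ^^ j) f s \<noteq> 0"
  shows "f \<in> \<Omega>[at s](\<lambda>y. (y - s) ^ j)"
proof -
  define c where "c = \<bar>(deriv ^^ j) f s\<bar> / 2"
  have "eventually (\<lambda>y. \<forall>t\<in>closed_segment s y. t \<in> S \<and> c < \<bar>(deriv ^^ j) f t\<bar>) (nhds s)"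
    unfolding c_def
    by (intro eventually_closed_segment_nhds eventually_near_continuous(2)
        assms(1,2,6) Ck_on_continuous_on[OF assms(3,4)])
  then have "eventually (\<lambda>y. c / fact j * \<bar>(y - s) ^ j\<bar> \<le> \<bar>f y\<bar>) (nhds s)"
  proof eventually_elim
    case (elim y)
    then obtain t where "t \<in> closed_segment s y" "f y = (deriv ^^ j) f t / fact j * (y - s) ^ j"
      using Taylor_vanishing_derivs[OF assms(3,4,5)] by blast
    moreover have "c \<le> \<bar>(deriv ^^ j) f t\<bar>"
      using elim \<open>t \<in> closed_segment s y\<close> by (simp add: less_imp_le)
    ultimately show ?case
      by (auto simp: abs_mult intro!: mult_right_mono divide_right_mono)
  qed
  then have "eventually (\<lambda>y. c / fact j * \<bar>(y - s) ^ j\<bar> \<le> \<bar>f y\<bar>) (at s)"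
    using eventually_nhds_conv_at by blast
  moreover have "c / fact j > 0"
    using assms(6) c_def by simp
  ultimately show ?thesis
    by (intro landau_omega.bigI[of "c / fact j"]) simp_all
qed

lemma power_not_bigo_higher_power:
  fixes s :: real
  assumes "j < r"
  shows "(\<lambda>y. (y - s) ^ j) \<notin> O[at s](\<lambda>y. (y - s) ^ r)"
proof
  assume "(\<lambda>y. (y - s) ^ j) \<in> O[at s](\<lambda>y. (y - s) ^ r)"
  then obtain c where c: "c > 0" "eventually (\<lambda>y. \<bar>(y - s) ^ j\<bar> \<le> c * \<bar>(y - s) ^ r\<bar>) (at s)"
    by (elim landau_o.bigE) simp
  have "((\<lambda>y. \<bar>y - s\<bar> ^ (r - j)) \<longlongrightarrow> \<bar>s - s\<bar> ^ (r - j)) (at s)"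
    by (intro tendsto_intros)
  then have "eventually (\<lambda>y. \<bar>y - s\<bar> ^ (r - j) < 1 / c) (at s)"
    by (rule order_tendstoD(2)) (use assms c(1) in \<open>auto simp: power_0_left\<close>)
  moreover have "eventually (\<lambda>y. y \<noteq> s) (at s)"
    by (simp add: eventually_at_filter)
  ultimately have "eventually (\<lambda>_. False) (at s)"
    using c(2)
  proof eventually_elim
    case (elim y)
    have "\<bar>y - s\<bar> ^ j \<le> c * (\<bar>y - s\<bar> ^ j * \<bar>y - s\<bar> ^ (r - j))"
      using elim(3) assms by (simp add: power_abs power_add[symmetric])
    also have "\<dots> < \<bar>y - s\<bar> ^ j"
      using elim(1,2) c(1) by (simp add: field_simps)
    finally show False by simp
  qed
  then show False by (simp add: trivial_limit_at)
qed

lemma power_bigo_lower_power: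
  fixes s :: real
  assumes "r \<le> a"
  shows "(\<lambda>y. (y - s) ^ a) \<in> O[at s](\<lambda>y. (y - s) ^ r)"
proof -
  have "((\<lambda>y. (y - s) ^ (a - r) / 1) \<longlongrightarrow> (s - s) ^ (a - r) / 1) (at s)"
    by (intro tendsto_intros) simp_all
  then have "(\<lambda>y. (y - s) ^ (a - r)) \<in> O[at s](\<lambda>_. 1)"
    by (rule bigoI_tendsto) simp
  then have "(\<lambda>y. (y - s) ^ r * (y - s) ^ (a - r)) \<in> O[at s](\<lambda>y. (y - s) ^ r)"
    by (intro landau_o.big_1_mult) simp_all
  then show ?thesis
    using assms by (simp flip: power_add)
qed

lemma bigo_power_iff_vanishing_derivs:
  assumes "open S" "s \<in> S" "Ck_on n S f" "r \<le> n"
  shows "f \<in> O[at s](\<lambda>y. (y - s) ^ r) \<longleftrightarrow> (\<forall>j<r. (deriv ^^ j) f s = 0)"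
proof
  assume bigo: "f \<in> O[at s](\<lambda>y. (y - s) ^ r)"
  show "\<forall>j<r. (deriv ^^ j) f s = 0"
  proof (rule ccontr)
    assume "\<not> (\<forall>j<r. (deriv ^^ j) f s = 0)"
    then obtain j where j: "j < r" "(deriv ^^ j) f s \<noteq> 0" by blast
    define j0 where "j0 = zero_mult f s"
    have "j0 < r" using zero_mult_le[OF j(2)] j(1) j0_def by simp
    have "f \<in> \<Omega>[at s](\<lambda>y. (y - s) ^ j0)"
      using \<open>j0 < r\<close> assms j0_def higher_deriv_less_zero_mult higher_deriv_zero_mult_nonzero[OF j(2)]
      by (intro bigomega_power_if_first_nonvanishing_deriv[of S s n]) auto
    with bigo have "(\<lambda>y. (y - s) ^ j0) \<in> O[at s](\<lambda>y. (y - s) ^ r)"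
      by (auto simp: bigomega_iff_bigo intro: landau_o.big_trans)
    with power_not_bigo_higher_power[OF \<open>j0 < r\<close>] show False by blast
  qed
qed (use bigo_power_if_vanishing_derivs[OF assms] in blast)

section \<open>Derivatives of a quotient\<close>

text \<open>The numerator \<open>Q l\<close> in \<open>(1/G)\<^sup>(\<^sup>l\<^sup>) = Q l / G\<^sup>l\<^sup>+\<^sup>1\<close>; the recursion is the quotient rule
  applied to \<open>Q l / G\<^sup>l\<^sup>+\<^sup>1\<close>.\<close>
primrec inverse_deriv_numer :: "(real \<Rightarrow> real) \<Rightarrow> nat \<Rightarrow> real \<Rightarrow> real" where
  "inverse_deriv_numer G 0 = (\<lambda>x. 1)"
| "inverse_deriv_numer G (Suc l) =
     (\<lambda>x. G x * deriv (inverse_deriv_numer G l) x - of_nat (Suc l) * deriv G x * inverse_deriv_numer G l x)"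

lemma Ck_on_inverse_deriv_numer:
  assumes "open S" "Ck_on k S G" "l \<le> k"
  shows "Ck_on (k - l) S (inverse_deriv_numer G l)"
  using assms(3)
proof (induction l)
  case (Suc l)
  have Q: "Ck_on (Suc (k - Suc l)) S (inverse_deriv_numer G l)"
    using Suc by (simp add: Suc_diff_Suc)
  have G: "Ck_on (Suc (k - Suc l)) S G"
    using Ck_on_mono[OF assms(2)] Suc.prems by simp
  have "Ck_on (k - Suc l) S (deriv (inverse_deriv_numer G l))" "Ck_on (k - Suc l) S (deriv G)"
    using Q G by (simp_all add: Ck_on_Suc)
  then show ?case
    using Ck_on_mono[OF Q, of "k - Suc l"] Ck_on_mono[OF G, of "k - Suc l"]
    by (simp only: inverse_deriv_numer.simps)
       (intro Ck_on_diff Ck_on_mult Ck_on_const assms(1); simp)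
qed (simp add: Ck_on_const)

lemma higher_deriv_inverse:
  assumes "open S" "Ck_on k S G" "\<And>x. x \<in> S \<Longrightarrow> G x \<noteq> 0" "l \<le> k" "y \<in> S"
  shows "(deriv ^^ l) (\<lambda>x. inverse (G x)) y = inverse_deriv_numer G l y / G y ^ Suc l"
  using assms(4,5)
proof (induction l arbitrary: y)
  case (Suc l y)
  define Q where "Q = inverse_deriv_numer G l"
  have "Ck_on (Suc (k - Suc l)) S Q"
    using Ck_on_inverse_deriv_numer[OF assms(1,2), of l] Suc.prems Q_def by (simp add: Suc_diff_Suc)
  then have dQ: "(Q has_real_derivative deriv Q y) (at y)"
    using Suc.prems by (simp add: Ck_on_Suc)
  have dG: "(G has_real_derivative deriv G y) (at y)"
    using Ck_on_has_real_derivative[OF assms(2), of 0 y] Suc.prems by simp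
  have Gy: "G y \<noteq> 0" using assms(3) Suc.prems by simp
  have "eventually (\<lambda>x. (deriv ^^ l) (\<lambda>x. inverse (G x)) x = Q x / G x ^ Suc l) (nhds y)"
    using eventually_nhds_in_open[OF assms(1) Suc.prems(2)] by eventually_elim (use Suc Q_def in auto)
  then have "(deriv ^^ Suc l) (\<lambda>x. inverse (G x)) y = deriv (\<lambda>x. Q x / G x ^ Suc l) y"
    by (simp add: deriv_cong_ev)
  also have "\<dots> = (deriv Q y * G y ^ Suc l - Q y * (of_nat (Suc l) * (deriv G y * G y ^ (Suc l - Suc 0))))
      / (G y ^ Suc l * G y ^ Suc l)"
    by (intro DERIV_imp_deriv DERIV_divide[OF dQ DERIV_power[OF dG]]) (use Gy in simp)
  also have "\<dots> = inverse_deriv_numer G (Suc l) y / G y ^ Suc (Suc l)"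
    using Gy unfolding Q_def by (simp add: field_simps)
  finally show ?case .
qed (simp add: divide_inverse)

lemma higher_deriv_divide:
  assumes "open S" "Ck_on k S M" "Ck_on k S G" "\<And>x. x \<in> S \<Longrightarrow> G x \<noteq> 0" "m \<le> k" "y \<in> S"
  shows "G y ^ Suc m * (deriv ^^ m) (\<lambda>x. M x / G x) y =
    (\<Sum>i = 0..m. of_nat (m choose i) * (deriv ^^ i) M y * inverse_deriv_numer G (m - i) y * G y ^ i)"
proof -
  have "(deriv ^^ m) (\<lambda>x. M x / G x) y = (deriv ^^ m) (\<lambda>x. M x * inverse (G x)) y"
    by (simp add: divide_inverse)
  also have "\<dots> = (\<Sum>i = 0..m. of_nat (m choose i) * (deriv ^^ i) M y *
      (inverse_deriv_numer G (m - i) y / G y ^ Suc (m - i)))"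
    using assms higher_deriv_inverse[OF assms(1,3,4)]
    by (simp add: higher_deriv_mult_Ck_on[OF assms(1,2) Ck_on_inverse[OF assms(1,3,4)]])
  finally have "G y ^ Suc m * (deriv ^^ m) (\<lambda>x. M x / G x) y = (\<Sum>i = 0..m. G y ^ Suc m *
      (of_nat (m choose i) * (deriv ^^ i) M y * (inverse_deriv_numer G (m - i) y / G y ^ Suc (m - i))))"
    by (simp only: sum_distrib_left)
  also have "\<dots> = (\<Sum>i = 0..m.
      of_nat (m choose i) * (deriv ^^ i) M y * inverse_deriv_numer G (m - i) y * G y ^ i)"
  proof (rule sum.cong[OF refl])
    fix i assume "i \<in> {0..m}"
    then have "G y ^ Suc m = G y ^ i * G y ^ Suc (m - i)"
      by (simp flip: power_add)
    then show "G y ^ Suc m * (of_nat (m choose i) * (deriv ^^ i) M y *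
        (inverse_deriv_numer G (m - i) y / G y ^ Suc (m - i))) =
      of_nat (m choose i) * (deriv ^^ i) M y * inverse_deriv_numer G (m - i) y * G y ^ i"
      using assms(4,6) by (simp add: field_simps)
  qed
  finally show ?thesis .
qed

lemma higher_deriv_divide_numerator_bigo:
  assumes "open S" "s \<in> S" "m \<le> k" "Ck_on k S M" "Ck_on k S G" "G s = 0"
    and "r \<le> k" "\<And>j. j < r \<Longrightarrow> (deriv ^^ j) M s = 0"
  shows "(\<lambda>y. \<Sum>i = 0..m. of_nat (m choose i) * (deriv ^^ i) M y * inverse_deriv_numer G (m - i) y * G y ^ i)
    \<in> O[at s](\<lambda>y. (y - s) ^ r)"
proof (rule big_sum_in_bigo)
  fix i assume "i \<in> {0..m}"
  then have i: "i \<le> m" by simp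
  have Mi: "(deriv ^^ i) M \<in> O[at s](\<lambda>y. (y - s) ^ (r - i))"
    using assms i
    by (intro bigo_power_if_vanishing_derivs[OF assms(1,2) Ck_on_higher_deriv[OF assms(4)]])
       (auto simp: funpow_deriv_add)
  have Q: "inverse_deriv_numer G (m - i) \<in> O[at s](\<lambda>_. 1)"
  proof -
    have "continuous_on S (inverse_deriv_numer G (m - i))"
      using Ck_on_continuous_on[OF Ck_on_inverse_deriv_numer[OF assms(1,5)], of "m - i" 0] assms(3)
      by simp
    then have "isCont (inverse_deriv_numer G (m - i)) s"
      using assms(1,2) continuous_on_eq_continuous_at by blast
    then show ?thesis
      by (intro bigoI_tendsto[where c = "inverse_deriv_numer G (m - i) s"]) (simp_all add: isCont_def)
  qed
  have Gi: "(\<lambda>y. G y ^ i) \<in> O[at s](\<lambda>y. (y - s) ^ i)"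
  proof (cases "i = 0")
    case False
    then have "G \<in> O[at s](\<lambda>y. (y - s) ^ 1)"
      using assms i by (intro bigo_power_if_vanishing_derivs[OF assms(1,2,5)]) auto
    then show ?thesis by (simp add: landau_o.big_power)
  qed simp
  have "(\<lambda>y. of_nat (m choose i) * (deriv ^^ i) M y) \<in> O[at s](\<lambda>y. (y - s) ^ (r - i))"
    by (rule landau_o.big_mult[OF bigo_const Mi, unfolded mult_1_left])
  then have "(\<lambda>y. of_nat (m choose i) * (deriv ^^ i) M y * inverse_deriv_numer G (m - i) y)
      \<in> O[at s](\<lambda>y. (y - s) ^ (r - i))"
    by (rule landau_o.big_1_mult[OF _ Q])
  then have "(\<lambda>y. of_nat (m choose i) * (deriv ^^ i) M y * inverse_deriv_numer G (m - i) y * G y ^ i)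
      \<in> O[at s](\<lambda>y. (y - s) ^ (r - i) * (y - s) ^ i)"
    by (rule landau_o.big_mult[OF _ Gi])
  also have "(\<lambda>y. (y - s) ^ (r - i) * (y - s) ^ i) \<in> O[at s](\<lambda>y. (y - s) ^ r)"
    using power_bigo_lower_power[of r "r - i + i" s] by (simp add: power_add)
  finally show "(\<lambda>y. of_nat (m choose i) * (deriv ^^ i) M y * inverse_deriv_numer G (m - i) y * G y ^ i)
      \<in> O[at s](\<lambda>y. (y - s) ^ r)" .
qed

section \<open>Zeros of the numerator\<close>

lemma count_zeros_off_zeros_of_denominator:
  assumes "is_interval S" "open S" "finite Z" "m \<le> k"
    and "Ck_on k (S - Z) M" "Ck_on k (S - Z) G" "Ck_on k (S - Z) F"
    and "\<And>x. x \<in> S - Z \<Longrightarrow> G x \<noteq> 0"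
    and "\<And>x. x \<in> S - Z \<Longrightarrow> (deriv ^^ m) (\<lambda>x. M x / G x) x = F x / G x ^ (m + 1)"
    and "finite (zeros_in F (S - Z))" "zeros_mult_le k M (S - Z)" "zeros_mult_le k F (S - Z)"
  shows "finite (zeros_in M (S - Z))"
    "count_zeros M (S - Z) \<le> count_zeros F (S - Z) + m * (card Z + 1)"
proof -
  have U: "open (S - Z)"
    using assms(2,3) by (simp add: open_Diff finite_imp_closed)
  define P where "P = (\<lambda>x. M x / G x)"
  have inv: "Ck_on k (S - Z) (\<lambda>x. inverse (G x))"
    by (rule Ck_on_inverse[OF U assms(6,8)])
  have "Ck_on k (S - Z) P"
    unfolding P_def divide_inverse by (rule Ck_on_mult[OF U assms(5) inv])
  note P = count_zeros_mult_nonvanishing[OF U assms(5) inv _ _ assms(11), of P]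
  note Pm = count_zeros_mult_nonvanishing[OF U assms(7)
      Ck_on_inverse[OF U Ck_on_power[OF U assms(6)]] _ _ assms(12), of "m + 1" "(deriv ^^ m) P"]
  have "finite (zeros_in P (S - Z)) \<and>
      count_zeros P (S - Z) \<le> count_zeros ((deriv ^^ m) P) (S - Z) + m * (card Z + 1)"
    using count_zeros_le_count_zeros_higher_deriv[OF assms(1,3) Ck_on_mono[OF \<open>Ck_on k (S - Z) P\<close> assms(4)]]
      Pm assms(8-10) by (simp add: P_def divide_inverse)
  then show "finite (zeros_in M (S - Z))"
    "count_zeros M (S - Z) \<le> count_zeros F (S - Z) + m * (card Z + 1)"
    using P Pm assms(8,9) by (simp_all add: P_def divide_inverse)
qed

lemma zero_mult_le_at_zero_of_denominator:
  assumes "open S" "finite Z" "s \<in> S" "m \<le> k"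
    and "Ck_on k S M" "Ck_on k S G" "Ck_on k S F"
    and "\<And>x. x \<in> S - Z \<Longrightarrow> G x \<noteq> 0"
    and "\<And>x. x \<in> S - Z \<Longrightarrow> (deriv ^^ m) (\<lambda>x. M x / G x) x = F x / G x ^ (m + 1)"
    and "G s = 0" "M s = 0" "zeros_mult_le k M S" "zeros_finite_order F S"
  shows "F s = 0" "zero_mult M s \<le> zero_mult F s"
proof -
  obtain l where l: "(deriv ^^ l) M s \<noteq> 0" "l \<le> k"
    using assms(3,11,12) unfolding zeros_mult_le_def zeros_in_def by blast
  define r where "r = zero_mult M s"
  have "r \<le> k" using zero_mult_le[OF l(1)] l(2) r_def by simp
  have "0 < r" using zero_mult_pos[OF assms(11) l(1)] r_def by simp
  have U: "open (S - Z)"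
    using assms(1,2) by (simp add: open_Diff finite_imp_closed)
  have "eventually (\<lambda>y. y \<notin> Z) (at s)"
    using islimpt_finite[OF assms(2)] islimpt_iff_eventually by blast
  then have "eventually (\<lambda>y. y \<in> S - Z) (at s)"
    using eventually_at_in_open[OF assms(1,3)] by eventually_elim auto
  then have numerator: "eventually (\<lambda>y. (\<Sum>i = 0..m. of_nat (m choose i) * (deriv ^^ i) M y *
      inverse_deriv_numer G (m - i) y * G y ^ i) = F y) (at s)"
  proof eventually_elim
    case (elim y)
    then show ?case
      using higher_deriv_divide[OF U Ck_on_subset[OF assms(5)] Ck_on_subset[OF assms(6)] assms(8,4) elim]
        assms(8,9)[OF elim] by (simp add: field_simps)
  qed
  have "(\<lambda>y. \<Sum>i = 0..m. of_nat (m choose i) * (deriv ^^ i) M y *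
      inverse_deriv_numer G (m - i) y * G y ^ i) \<in> O[at s](\<lambda>y. (y - s) ^ r)"
    using higher_deriv_less_zero_mult r_def
    by (intro higher_deriv_divide_numerator_bigo[OF assms(1,3,4,5,6,10) \<open>r \<le> k\<close>]) simp
  then have "F \<in> O[at s](\<lambda>y. (y - s) ^ r)"
    by (rule landau_o.big.in_cong[OF numerator, THEN iffD1])
  then have vanish: "(deriv ^^ j) F s = 0" if "j < r" for j
    using bigo_power_iff_vanishing_derivs[OF assms(1,3,7) \<open>r \<le> k\<close>] that by blast
  show "F s = 0"
    using vanish[OF \<open>0 < r\<close>] by simp
  then obtain l' where "(deriv ^^ l') F s \<noteq> 0"
    using assms(3,13) unfolding zeros_finite_order_def zeros_in_def by blast
  show "zero_mult M s \<le> zero_mult F s"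
  proof (rule ccontr)
    assume "\<not> zero_mult M s \<le> zero_mult F s"
    then have "(deriv ^^ zero_mult F s) F s = 0"
      using vanish r_def by simp
    with higher_deriv_zero_mult_nonzero[OF \<open>(deriv ^^ l') F s \<noteq> 0\<close>] show False by simp
  qed
qed

lemma count_zeros_le_of_higher_deriv_quotient:
  assumes "is_interval S" "open S" "m \<le> k"
    and "Ck_on k S M" "Ck_on k S G" "Ck_on k S F"
    and "\<And>h. h \<in> S - zeros_in G S \<Longrightarrow> (deriv ^^ m) (\<lambda>x. M x / G x) h = F h / G h ^ (m + 1)"
    and "finite (zeros_in F S)" "finite (zeros_in G S)"
    and "zeros_mult_le k M S" "zeros_mult_le k G S" "zeros_mult_le k F S"
  shows "finite (zeros_in M S) \<and>
    count_zeros M S \<le> count_zeros F S + m * count_zeros G S + m"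
proof -
  define Z where "Z = zeros_in G S"
  have G: "\<And>x. x \<in> S - Z \<Longrightarrow> G x \<noteq> 0"
    unfolding Z_def zeros_in_def by auto
  have F_off: "finite (zeros_in F (S - Z))"
    using assms(8) by (rule finite_subset[rotated]) (auto simp: zeros_in_def)
  note off = count_zeros_off_zeros_of_denominator[OF assms(1,2) assms(9)[folded Z_def] assms(3)
      Ck_on_subset[OF assms(4) Diff_subset] Ck_on_subset[OF assms(5) Diff_subset]
      Ck_on_subset[OF assms(6) Diff_subset] G assms(7)[folded Z_def] F_off
      zeros_mult_le_subset[OF assms(10) Diff_subset] zeros_mult_le_subset[OF assms(12) Diff_subset]]
  have at_Z: "s \<in> zeros_in F S \<and> zero_mult M s \<le> zero_mult F s" if "s \<in> zeros_in M S \<inter> Z" for s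
  proof -
    have "s \<in> S" "G s = 0" "M s = 0"
      using that unfolding Z_def zeros_in_def by auto
    then show ?thesis
      using zero_mult_le_at_zero_of_denominator[OF assms(2,9) _ assms(3-6) G assms(7)[folded Z_def] _ _
          assms(10) zeros_mult_le_imp_finite_order[OF assms(12)], of s]
      unfolding Z_def zeros_in_def by auto
  qed
  have MZ: "finite (zeros_in M S)"
    using off(1) assms(9) by (rule finite_subset[rotated, OF finite_UnI]) (auto simp: Z_def zeros_in_def)
  have "(\<Sum>x\<in>zeros_in M S \<inter> Z. zero_mult M x) \<le> (\<Sum>x\<in>zeros_in M S \<inter> Z. zero_mult F x)"
    using at_Z by (intro sum_mono) blast
  also have "\<dots> \<le> (\<Sum>x\<in>zeros_in F S \<inter> Z. zero_mult F x)"
    using at_Z assms(8) by (intro sum_mono2) auto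
  finally have "(\<Sum>x\<in>zeros_in M S \<inter> Z. zero_mult M x) \<le> (\<Sum>x\<in>zeros_in F S \<inter> Z. zero_mult F x)" .
  moreover have "count_zeros M (S - Z) \<le> count_zeros F (S - Z) + m * card Z + m"
    using off(2) by (simp add: algebra_simps)
  moreover have "m * card Z \<le> m * count_zeros G S"
    unfolding Z_def
    by (rule mult_le_mono2[OF card_le_count_zeros[OF zeros_mult_le_imp_finite_order[OF assms(11)]]])
  ultimately show ?thesis
    using MZ count_zeros_split[OF MZ, of Z] count_zeros_split[OF assms(8), of Z] by linarith
qed

lemma open_ointerval: "open (ointerval a b)"
proof -
  have "ointerval a b = ereal -` {a<..<b}"
    by (auto simp: ointerval_def)
  then show ?thesis by (simp add: open_ereal_vimage)
qed

lemma is_interval_ointerval: "is_interval (ointerval a b)"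
  unfolding is_interval_1 ointerval_def
  by (auto intro: ereal_less_eq(3)[THEN iffD2, THEN le_less_trans]
      ereal_less_eq(3)[THEN iffD2, THEN less_le_trans[rotated]])

theorem theorem2p1:
  fixes k m :: nat and \<alpha> \<beta> :: ereal and M G F :: "real \<Rightarrow> real"
  assumes "k \<ge> 1" and "1 \<le> m" and "m \<le> k" and "\<alpha> < \<beta>"
    and "Ck_on k (ointerval \<alpha> \<beta>) M"
    and "Ck_on k (ointerval \<alpha> \<beta>) G"
    and "Ck_on k (ointerval \<alpha> \<beta>) F"
    and "\<And>h. h \<in> ointerval \<alpha> \<beta> - zeros_in G (ointerval \<alpha> \<beta>) \<Longrightarrow>
           (deriv ^^ m) (\<lambda>x. M x / G x) h = F h / G h ^ (m + 1)"
    and "finite (zeros_in F (ointerval \<alpha> \<beta>))"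
    and "finite (zeros_in G (ointerval \<alpha> \<beta>))"
    and "zeros_mult_le k M (ointerval \<alpha> \<beta>)"
    and "zeros_mult_le k G (ointerval \<alpha> \<beta>)"
    and "zeros_mult_le k F (ointerval \<alpha> \<beta>)"
  shows "finite (zeros_in M (ointerval \<alpha> \<beta>)) \<and>
         count_zeros M (ointerval \<alpha> \<beta>)
           \<le> count_zeros F (ointerval \<alpha> \<beta>) + m * count_zeros G (ointerval \<alpha> \<beta>) + m"
  by (rule count_zeros_le_of_higher_deriv_quotient[OF is_interval_ointerval open_ointerval assms(3,5-13)])

end
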